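(* Let $p+q=4k+2$ with $k\ge1$. (i) If $p,q$ are odd, $p\ge1$ and $q\ge5$, then $\mathbb{O}_{p,q}\simeq\mathbb{O}_{p+4,q-4}$. (ii) If $p,q$ are even, $p\ge4$ and $q\ge2$, then $\mathbb{O}_{p,q}\simeq\mathbb{O}_{p-2,q+2}$. (The isomorphisms preserve the $\mathbb{Z}_2^n$-graded structure.)
   Context: $\mathbb{Z}_2=\{0,1\}$. For $p+q=n\ge3$, $\mathbb{O}_{p,q}$ is the real algebra with basis $\{u_x: x\in\mathbb{Z}_2^n\}$ and product $u_x\cdot u_y=(-1)^{f(x,y)}u_{x+y}$, where $f(x,y)=\sum_{1\le i<j<k\le n}(x_ix_jy_k+x_iy_jx_k+y_ix_jx_k)+\sum_{1\le i\le j\le n}x_iy_j+\sum_{1\le i\le p}x_iy_i$. Homogeneous elements are scalar multiples of some $u_x$. *)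

theory Defs
  imports Complex_Main
begin

text \<open>An element x of Z_2^n is encoded as the set of indices i in {1..n} with x_i = 1;
  addition in Z_2^n is symmetric difference.\<close>

definition grades :: "nat \<Rightarrow> nat set set" where
  "grades n = Pow {1..n}"

definition zadd :: "nat set \<Rightarrow> nat set \<Rightarrow> nat set" where
  "zadd x y = (x - y) \<union> (y - x)"

definition ind :: "nat set \<Rightarrow> nat \<Rightarrow> nat" where
  "ind x i = (if i \<in> x then 1 else 0)"

definition twist :: "nat \<Rightarrow> nat \<Rightarrow> nat set \<Rightarrow> nat set \<Rightarrow> nat" where
  "twist p q x y =
     (\<Sum>i\<in>{1..p+q}. \<Sum>j\<in>{i<..p+q}. \<Sum>k\<in>{j<..p+q}.
         ind x i * ind x j * ind y k + ind x i * ind y j * ind x k + ind y i * ind x j * ind x k)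
   + (\<Sum>i\<in>{1..p+q}. \<Sum>j\<in>{i..p+q}. ind x i * ind y j)
   + (\<Sum>i\<in>{1..p}. ind x i * ind y i)"

text \<open>Elements of O_{p,q}: real coefficient functions on Z_2^n (coefficient of u_x at x),
  vanishing outside Z_2^n.\<close>
definition Ocarrier :: "nat \<Rightarrow> (nat set \<Rightarrow> real) set" where
  "Ocarrier n = {a. \<forall>x. x \<notin> grades n \<longrightarrow> a x = 0}"

text \<open>Bilinear extension of u_x \<cdot> u_y = (-1)^f(x,y) u_{x+y}.\<close>
definition Omult :: "nat \<Rightarrow> nat \<Rightarrow> (nat set \<Rightarrow> real) \<Rightarrow> (nat set \<Rightarrow> real) \<Rightarrow> (nat set \<Rightarrow> real)" where
  "Omult p q a b = (\<lambda>z. if z \<in> grades (p+q)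
      then (\<Sum>x\<in>grades (p+q). (-1) ^ twist p q x (zadd x z) * a x * b (zadd x z))
      else 0)"

definition homogeneous :: "nat \<Rightarrow> (nat set \<Rightarrow> real) \<Rightarrow> bool" where
  "homogeneous n a \<longleftrightarrow> a \<in> Ocarrier n \<and> (\<exists>x\<in>grades n. \<forall>y. y \<noteq> x \<longrightarrow> a y = 0)"

definition graded_iso :: "nat \<Rightarrow> nat \<Rightarrow> nat \<Rightarrow> nat \<Rightarrow> bool" where
  "graded_iso p q p' q' \<longleftrightarrow> (\<exists>\<phi>.
      bij_betw \<phi> (Ocarrier (p+q)) (Ocarrier (p'+q')) \<and>
      (\<forall>a\<in>Ocarrier (p+q). \<forall>b\<in>Ocarrier (p+q). \<phi> (\<lambda>x. a x + b x) = (\<lambda>x. \<phi> a x + \<phi> b x)) \<and>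
      (\<forall>a\<in>Ocarrier (p+q). \<forall>c::real. \<phi> (\<lambda>x. c * a x) = (\<lambda>x. c * \<phi> a x)) \<and>
      (\<forall>a\<in>Ocarrier (p+q). \<forall>b\<in>Ocarrier (p+q). \<phi> (Omult p q a b) = Omult p' q' (\<phi> a) (\<phi> b)) \<and>
      (\<forall>a. homogeneous (p+q) a \<longrightarrow> homogeneous (p'+q') (\<phi> a)))"

end

theory Submission
  imports Defs
begin

text \<open>Modulo 2 the twist is \<open>f\<^sub>P(x,y) \<equiv> c(x,y) + \<beta>(x,y) + |x \<inter> y \<inter> P|\<close>, where \<open>P = {1..p}\<close>,
  \<open>\<beta>(x,y) = \<Sum>\<^bsub>i\<le>j\<^esub> x\<^sub>i y\<^sub>j\<close> and the cubic part \<open>c(x,y) \<equiv> |y| C(|x|,2) + |x \<inter> y| (1 + |x|)\<close> does not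
  depend on \<open>P\<close>. A linear automorphism \<open>\<sigma>\<close> of \<open>\<int>\<^sub>2\<^sup>n\<close> together with exponents \<open>e\<close> satisfying
  \<open>f\<^sub>P\<^sub>'(\<sigma> x, \<sigma> y) \<equiv> f\<^sub>P(x,y) + e(x) + e(y) + e(x + y)\<close> yields the graded isomorphism
  \<open>u\<^sub>x \<mapsto> (-1)\<^bsup>e(x)\<^esup> u\<^bsub>\<sigma> x\<^esub>\<close> from \<open>O\<^sub>p\<^sub>,\<^sub>q\<close> to \<open>O\<^sub>p\<^sub>'\<^sub>,\<^sub>q\<^sub>'\<close>.

  When \<open>n \<equiv> 2 (mod 4)\<close>, \<open>S\<close> is a set of four generators and \<open>V\<close> its complement, so that
  \<open>|V| \<equiv> 2 (mod 4)\<close>, the involution \<open>x \<mapsto> x + |x \<inter> S| V\<close> transforms \<open>f\<^sub>P\<close> into \<open>f\<^bsub>P + S\<^esub>\<close> up to such a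
  coboundary, provided \<open>|P - S|\<close> is odd. One such flip with \<open>S = {p+1..p+4}\<close> gives (i); three
  flips carry \<open>{1..p}\<close> to \<open>{1..p-2}\<close> and give (ii).\<close>

section \<open>Parity of cardinalities\<close>

lemma card_zadd_add_card_Int:
  assumes "finite A" "finite B"
  shows "card (zadd A B) + 2 * card (A \<inter> B) = card A + card B"
proof -
  have "zadd A B = (A \<union> B) - (A \<inter> B)" by (auto simp: zadd_def)
  then have "card (zadd A B) = card (A \<union> B) - card (A \<inter> B)"
    using assms by (simp add: card_Diff_subset Int_Un_distrib2 inf.coboundedI1)
  moreover have "card (A \<inter> B) \<le> card (A \<union> B)"
    using assms by (intro card_mono) auto
  ultimately show ?thesis
    using card_Un_Int[OF assms] by simp
qed

lemma odd_card_zadd: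
  "finite A \<Longrightarrow> finite B \<Longrightarrow> odd (card (zadd A B)) \<longleftrightarrow> (odd (card A) \<noteq> odd (card B))"
  using card_zadd_add_card_Int[of A B] by (metis even_add even_mult_iff even_numeral)

lemma zadd_Int_distrib: "zadd A B \<inter> C = zadd (A \<inter> C) (B \<inter> C)"
  by (auto simp: zadd_def)

lemma odd_card_zadd_Int:
  "finite C \<Longrightarrow> odd (card (zadd A B \<inter> C)) \<longleftrightarrow> (odd (card (A \<inter> C)) \<noteq> odd (card (B \<inter> C)))"
  unfolding zadd_Int_distrib by (simp add: odd_card_zadd)

lemma odd_card_split:
  assumes "finite x" "x \<subseteq> A \<union> B" "A \<inter> B = {}"
  shows "odd (card x) \<longleftrightarrow> (odd (card (x \<inter> A)) \<noteq> odd (card (x \<inter> B)))"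
proof -
  have "x = (x \<inter> A) \<union> (x \<inter> B)" using assms(2) by auto
  moreover have "card ((x \<inter> A) \<union> (x \<inter> B)) = card (x \<inter> A) + card (x \<inter> B)"
    using assms by (intro card_Un_disjoint) auto
  ultimately have "card x = card (x \<inter> A) + card (x \<inter> B)" by simp
  then show ?thesis by simp
qed

lemma choose_two_add: "(u + v) choose 2 = (u choose 2) + (v choose 2) + u * (v::nat)"
  by (induction v) (auto simp: numeral_2_eq_2)

lemma choose_two_Suc: "Suc m choose 2 = (m choose 2) + m"
  by (simp add: numeral_2_eq_2)

lemma odd_choose_two_double: "odd ((c + c) choose 2) \<longleftrightarrow> odd (c::nat)"
  unfolding choose_two_add by simp

lemma odd_choose_two_card_zadd:
  assumes "finite A" "finite B"
  shows "odd (card (zadd A B) choose 2) \<longleftrightarrow>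
    (((odd (card A choose 2) \<noteq> odd (card B choose 2)) \<noteq> (odd (card A) \<and> odd (card B)))
      \<noteq> odd (card (A \<inter> B)))"
proof -
  define c where "c = card (A \<inter> B)"
  have "card A + card B = card (zadd A B) + (c + c)"
    using card_zadd_add_card_Int[OF assms] unfolding c_def by simp
  then have "odd ((card A + card B) choose 2) \<longleftrightarrow> (odd (card (zadd A B) choose 2) \<noteq> odd c)"
    by (simp add: choose_two_add[of "card (zadd A B)"] odd_choose_two_double)
  moreover have "odd ((card A + card B) choose 2) \<longleftrightarrow>
      ((odd (card A choose 2) \<noteq> odd (card B choose 2)) \<noteq> (odd (card A) \<and> odd (card B)))"
    unfolding choose_two_add by simp blast
  ultimately show ?thesis unfolding c_def by auto
qed

lemma card_mod_4_eq_2_parities: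
  assumes "card V mod 4 = 2"
  shows "even (card V)" "odd (card V choose 2)"
proof -
  obtain m where m: "card V = (2 * m + 1) + (2 * m + 1)"
    using assms by (metis add.commute add_mult_distrib2 div_mult_mod_eq mult.commute
        mult_2_right numeral_Bit0 one_add_one)
  then show "even (card V)" by simp
  show "odd (card V choose 2)"
    unfolding m odd_choose_two_double by simp
qed

section \<open>The twisting function\<close>

lemma ind_Int: "ind (x \<inter> y) i = ind x i * ind y i"
  by (simp add: ind_def)

lemma ind_zadd: "ind (zadd x y) i = (if odd (ind x i + ind y i) then 1 else 0)"
  by (simp add: ind_def zadd_def)

lemma ind_cases: "ind x i = 0 \<or> ind x i = 1"
  by (simp add: ind_def)

lemma sum_ind: "finite A \<Longrightarrow> (\<Sum>i\<in>A. ind x i) = card (x \<inter> A)"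
  by (induction A rule: finite_induct) (auto simp: ind_def Int_insert_right)

lemma card_Int_atLeastAtMost_Suc: "card (x \<inter> {1..Suc n}) = card (x \<inter> {1..n}) + ind x (Suc n)"
proof -
  have "x \<inter> {1..Suc n} = (if Suc n \<in> x then insert (Suc n) (x \<inter> {1..n}) else x \<inter> {1..n})"
    by (auto simp: le_Suc_eq)
  then show ?thesis by (simp add: ind_def)
qed

lemma sum_greaterThanAtMost_Suc:
  "i \<le> n \<Longrightarrow> (\<Sum>j\<in>{i<..Suc n}. F j) = F (Suc n) + (\<Sum>j\<in>{i<..n}. F j)"
proof -
  assume "i \<le> n"
  then have "{i<..Suc n} = insert (Suc n) {i<..n}" by auto
  then show ?thesis by simp
qed

definition cubic_form :: "nat \<Rightarrow> nat set \<Rightarrow> nat set \<Rightarrow> nat" where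
  "cubic_form n x y = (\<Sum>i\<in>{1..n}. \<Sum>j\<in>{i<..n}. \<Sum>k\<in>{j<..n}.
     ind x i * ind x j * ind y k + ind x i * ind y j * ind x k + ind y i * ind x j * ind x k)"

definition upper_form :: "nat \<Rightarrow> nat set \<Rightarrow> nat set \<Rightarrow> nat" where
  "upper_form n x y = (\<Sum>i\<in>{1..n}. \<Sum>j\<in>{i..n}. ind x i * ind y j)"

definition strict_upper_form :: "nat \<Rightarrow> nat set \<Rightarrow> nat set \<Rightarrow> nat" where
  "strict_upper_form n x y = (\<Sum>i\<in>{1..n}. \<Sum>j\<in>{i<..n}. ind x i * ind y j)"

text \<open>The set \<open>P\<close> takes the place of \<open>{1..p}\<close>, the generators whose square is \<open>+1\<close>.\<close>

definition twist_on :: "nat \<Rightarrow> nat set \<Rightarrow> nat set \<Rightarrow> nat set \<Rightarrow> nat" where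
  "twist_on n P x y = cubic_form n x y + upper_form n x y + card (x \<inter> y \<inter> P)"

lemma twist_eq_twist_on: "twist p q x y = twist_on (p + q) {1..p} x y"
  unfolding twist_def twist_on_def cubic_form_def upper_form_def
  by (simp add: ind_Int[symmetric] sum_ind)

lemma strict_upper_form_Suc:
  "strict_upper_form (Suc n) x y = strict_upper_form n x y + ind y (Suc n) * card (x \<inter> {1..n})"
proof -
  have "strict_upper_form (Suc n) x y = (\<Sum>i\<in>{1..n}. \<Sum>j\<in>{i<..Suc n}. ind x i * ind y j)"
    unfolding strict_upper_form_def by (simp add: add.commute)
  also have "\<dots> = (\<Sum>i\<in>{1..n}. ind x i * ind y (Suc n) + (\<Sum>j\<in>{i<..n}. ind x i * ind y j))"
    by (rule sum.cong) (auto simp: sum_greaterThanAtMost_Suc)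
  also have "\<dots> = strict_upper_form n x y + ind y (Suc n) * card (x \<inter> {1..n})"
    by (simp add: sum.distrib strict_upper_form_def sum_distrib_right[symmetric] sum_ind)
  finally show ?thesis .
qed

lemma cubic_form_Suc:
  "cubic_form (Suc n) x y = cubic_form n x y + ind y (Suc n) * strict_upper_form n x x
     + ind x (Suc n) * (strict_upper_form n x y + strict_upper_form n y x)"
proof -
  let ?t = "\<lambda>i j k. ind x i * ind x j * ind y k + ind x i * ind y j * ind x k + ind y i * ind x j * ind x k"
  have "cubic_form (Suc n) x y = (\<Sum>i\<in>{1..n}. \<Sum>j\<in>{i<..Suc n}. \<Sum>k\<in>{j<..Suc n}. ?t i j k)"
    unfolding cubic_form_def by (simp add: add.commute)
  also have "\<dots> = (\<Sum>i\<in>{1..n}. \<Sum>j\<in>{i<..n}. \<Sum>k\<in>{j<..Suc n}. ?t i j k)"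
    by (rule sum.cong) (auto simp: sum_greaterThanAtMost_Suc)
  also have "\<dots> = (\<Sum>i\<in>{1..n}. \<Sum>j\<in>{i<..n}. ?t i j (Suc n) + (\<Sum>k\<in>{j<..n}. ?t i j k))"
    by (intro sum.cong refl) (auto simp: sum_greaterThanAtMost_Suc)
  also have "\<dots> = (\<Sum>i\<in>{1..n}. \<Sum>j\<in>{i<..n}. ?t i j (Suc n)) + cubic_form n x y"
    by (simp add: sum.distrib cubic_form_def)
  also have "(\<Sum>i\<in>{1..n}. \<Sum>j\<in>{i<..n}. ?t i j (Suc n)) =
      ind y (Suc n) * strict_upper_form n x x + ind x (Suc n) * (strict_upper_form n x y + strict_upper_form n y x)"
    by (simp add: strict_upper_form_def sum.distrib sum_distrib_left sum_distrib_right algebra_simps)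
  finally show ?thesis by simp
qed

lemma strict_upper_form_diag: "strict_upper_form n x x = card (x \<inter> {1..n}) choose 2"
proof (induction n)
  case 0
  then show ?case by (simp add: strict_upper_form_def)
next
  case (Suc n)
  show ?case
    using ind_cases[of x "Suc n"]
    unfolding strict_upper_form_Suc card_Int_atLeastAtMost_Suc Suc.IH
    by (metis add.right_neutral choose_two_Suc mult_1 mult_zero_left plus_1_eq_Suc add.commute)
qed

lemma strict_upper_form_add_swap:
  "strict_upper_form n x y + strict_upper_form n y x + card (x \<inter> y \<inter> {1..n})
     = card (x \<inter> {1..n}) * card (y \<inter> {1..n})"
proof (induction n)
  case 0
  then show ?case by (simp add: strict_upper_form_def)
next
  case (Suc n)
  show ?case
    unfolding strict_upper_form_Suc card_Int_atLeastAtMost_Suc ind_Int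
    using Suc.IH ind_cases[of x "Suc n"] ind_cases[of y "Suc n"]
    by (auto simp: algebra_simps)
qed

lemma odd_cubic_form_iff:
  "odd (cubic_form n x y) \<longleftrightarrow>
     ((odd (card (y \<inter> {1..n})) \<and> odd (card (x \<inter> {1..n}) choose 2))
       \<noteq> (odd (card (x \<inter> y \<inter> {1..n})) \<and> even (card (x \<inter> {1..n}))))"
proof (induction n)
  case 0
  then show ?case by (simp add: cubic_form_def)
next
  case (Suc n)
  define a where "a = card (x \<inter> {1..n})"
  define b where "b = card (y \<inter> {1..n})"
  define c where "c = card (x \<inter> y \<inter> {1..n})"
  define u where "u = ind x (Suc n)"
  define v where "v = ind y (Suc n)"
  have swap: "odd (strict_upper_form n x y + strict_upper_form n y x) \<longleftrightarrow> (odd (a * b) \<noteq> odd c)"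
    using strict_upper_form_add_swap[of n x y] unfolding a_def b_def c_def by (metis odd_add)
  have step: "cubic_form (Suc n) x y
      = cubic_form n x y + v * (a choose 2) + u * (strict_upper_form n x y + strict_upper_form n y x)"
    unfolding cubic_form_Suc strict_upper_form_diag a_def u_def v_def ..
  have "card (x \<inter> {1..Suc n}) = a + u" "card (y \<inter> {1..Suc n}) = b + v"
    "card (x \<inter> y \<inter> {1..Suc n}) = c + u * v"
    unfolding a_def b_def c_def u_def v_def card_Int_atLeastAtMost_Suc ind_Int by simp_all
  then show ?case
    unfolding step using Suc.IH swap ind_cases[of x "Suc n"] ind_cases[of y "Suc n"]
    unfolding a_def[symmetric] b_def[symmetric] c_def[symmetric] u_def[symmetric] v_def[symmetric]
    by (elim disjE; simp add: choose_two_Suc; argo)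
qed

lemma upper_form_Suc:
  "upper_form (Suc n) x y = upper_form n x y + ind y (Suc n) * card (x \<inter> {1..Suc n})"
proof -
  have "upper_form (Suc n) x y
      = (\<Sum>i\<in>{1..Suc n}. ind x i * ind y (Suc n) + (\<Sum>j\<in>{i..n}. ind x i * ind y j))"
    unfolding upper_form_def by (intro sum.cong refl) (simp add: add.commute)
  also have "\<dots> = ind y (Suc n) * card (x \<inter> {1..Suc n})
      + (\<Sum>i\<in>{1..Suc n}. \<Sum>j\<in>{i..n}. ind x i * ind y j)"
    unfolding sum.distrib sum_distrib_right[symmetric] sum_ind[OF finite_atLeastAtMost]
    by (simp add: mult.commute)
  also have "(\<Sum>i\<in>{1..Suc n}. \<Sum>j\<in>{i..n}. ind x i * ind y j) = upper_form n x y"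
    by (simp add: upper_form_def add.commute)
  finally show ?thesis by simp
qed

lemma upper_form_diag: "upper_form n x x = Suc (card (x \<inter> {1..n})) choose 2"
proof (induction n)
  case 0
  then show ?case by (simp add: upper_form_def numeral_2_eq_2)
next
  case (Suc n)
  show ?case
    using ind_cases[of x "Suc n"]
    unfolding upper_form_Suc card_Int_atLeastAtMost_Suc Suc.IH
    by (auto simp: choose_two_Suc)
qed

lemma upper_form_add_swap:
  "upper_form n x y + upper_form n y x
     = card (x \<inter> {1..n}) * card (y \<inter> {1..n}) + card (x \<inter> y \<inter> {1..n})"
proof (induction n)
  case 0
  then show ?case by (simp add: upper_form_def)
next
  case (Suc n)
  show ?case
    unfolding upper_form_Suc card_Int_atLeastAtMost_Suc ind_Int
    using Suc.IH ind_cases[of x "Suc n"] ind_cases[of y "Suc n"]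
    by (auto simp: algebra_simps)
qed

lemma odd_upper_form_zadd_left:
  "odd (upper_form n (zadd x y) z) \<longleftrightarrow> (odd (upper_form n x z) \<noteq> odd (upper_form n y z))"
proof (induction n)
  case 0
  then show ?case by (simp add: upper_form_def)
next
  case (Suc n)
  have "odd (card (zadd x y \<inter> {1..Suc n}))
      \<longleftrightarrow> (odd (card (x \<inter> {1..Suc n})) \<noteq> odd (card (y \<inter> {1..Suc n})))"
    by (rule odd_card_zadd_Int) simp
  then show ?case
    unfolding upper_form_Suc[of n] using Suc.IH ind_cases[of z "Suc n"] by auto
qed

lemma odd_upper_form_zadd_right:
  "odd (upper_form n x (zadd y z)) \<longleftrightarrow> (odd (upper_form n x y) \<noteq> odd (upper_form n x z))"
proof (induction n)
  case 0
  then show ?case by (simp add: upper_form_def)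
next
  case (Suc n)
  show ?case
    unfolding upper_form_Suc[of n] using Suc.IH ind_cases[of y "Suc n"] ind_cases[of z "Suc n"]
    by (auto simp: ind_zadd)
qed

lemma odd_twist_on_iff:
  assumes "x \<subseteq> {1..n}" "y \<subseteq> {1..n}"
  shows "odd (twist_on n P x y) \<longleftrightarrow>
    ((((odd (card y) \<and> odd (card x choose 2)) \<noteq> (odd (card (x \<inter> y)) \<and> even (card x)))
      \<noteq> odd (upper_form n x y)) \<noteq> odd (card (x \<inter> y \<inter> P)))"
proof -
  have "x \<inter> {1..n} = x" "y \<inter> {1..n} = y" "x \<inter> y \<inter> {1..n} = x \<inter> y"
    using assms by auto
  then show ?thesis
    using odd_cubic_form_iff[of n x y] unfolding twist_on_def by simp argo
qed

section \<open>Equivalent twists give graded isomorphisms\<close>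

definition twist_equivalent :: "nat \<Rightarrow> nat set \<Rightarrow> nat set \<Rightarrow> bool" where
  "twist_equivalent n P P' \<longleftrightarrow> (\<exists>\<sigma> e. bij_betw \<sigma> (grades n) (grades n) \<and>
     (\<forall>x\<in>grades n. \<forall>y\<in>grades n. \<sigma> (zadd x y) = zadd (\<sigma> x) (\<sigma> y)) \<and>
     (\<forall>x\<in>grades n. \<forall>y\<in>grades n.
        even (twist_on n P' (\<sigma> x) (\<sigma> y) + twist_on n P x y + e x + e y + e (zadd x y))))"

lemma twist_equivalent_trans:
  assumes "twist_equivalent n P P'" "twist_equivalent n P' P''"
  shows "twist_equivalent n P P''"
proof -
  obtain \<sigma> e where bij1: "bij_betw \<sigma> (grades n) (grades n)"
    and add1: "\<forall>x\<in>grades n. \<forall>y\<in>grades n. \<sigma> (zadd x y) = zadd (\<sigma> x) (\<sigma> y)"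
    and coc1: "\<forall>x\<in>grades n. \<forall>y\<in>grades n.
      even (twist_on n P' (\<sigma> x) (\<sigma> y) + twist_on n P x y + e x + e y + e (zadd x y))"
    using assms(1) unfolding twist_equivalent_def by blast
  obtain \<sigma>' e' where bij2: "bij_betw \<sigma>' (grades n) (grades n)"
    and add2: "\<forall>x\<in>grades n. \<forall>y\<in>grades n. \<sigma>' (zadd x y) = zadd (\<sigma>' x) (\<sigma>' y)"
    and coc2: "\<forall>x\<in>grades n. \<forall>y\<in>grades n.
      even (twist_on n P'' (\<sigma>' x) (\<sigma>' y) + twist_on n P' x y + e' x + e' y + e' (zadd x y))"
    using assms(2) unfolding twist_equivalent_def by blast
  have \<sigma>_grades: "\<sigma> x \<in> grades n" if "x \<in> grades n" for x
    using bij1 that by (meson bij_betwE)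
  show ?thesis unfolding twist_equivalent_def
  proof (intro exI[of _ "\<sigma>' \<circ> \<sigma>"] exI[of _ "\<lambda>x. e x + e' (\<sigma> x)"] conjI ballI)
    show "bij_betw (\<sigma>' \<circ> \<sigma>) (grades n) (grades n)"
      using bij1 bij2 by (rule bij_betw_trans)
  next
    fix x y assume "x \<in> grades n" "y \<in> grades n"
    then show "(\<sigma>' \<circ> \<sigma>) (zadd x y) = zadd ((\<sigma>' \<circ> \<sigma>) x) ((\<sigma>' \<circ> \<sigma>) y)"
      using add1 add2 \<sigma>_grades by simp
  next
    fix x y assume x: "x \<in> grades n" and y: "y \<in> grades n"
    have "even (twist_on n P' (\<sigma> x) (\<sigma> y) + twist_on n P x y + e x + e y + e (zadd x y))"
      using coc1 x y by blast
    moreover have "even (twist_on n P'' (\<sigma>' (\<sigma> x)) (\<sigma>' (\<sigma> y)) + twist_on n P' (\<sigma> x) (\<sigma> y)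
        + e' (\<sigma> x) + e' (\<sigma> y) + e' (\<sigma> (zadd x y)))"
      using coc2 add1 x y \<sigma>_grades by simp
    ultimately show "even (twist_on n P'' ((\<sigma>' \<circ> \<sigma>) x) ((\<sigma>' \<circ> \<sigma>) y) + twist_on n P x y
        + (e x + e' (\<sigma> x)) + (e y + e' (\<sigma> y)) + (e (zadd x y) + e' (\<sigma> (zadd x y))))"
      by simp presburger
  qed
qed

lemma minus_one_power_cocycle:
  assumes "even (u + v + a + b + c)"
  shows "(-1::real) ^ u * (-1) ^ a * (-1) ^ b = (-1) ^ c * (-1) ^ v"
proof -
  have "even ((u + a + b) + (c + v))" using assms by presburger
  then have "(-1::real) ^ (u + a + b) = (-1) ^ (c + v)"
    by (simp add: minus_one_power_iff)
  then show ?thesis by (simp add: power_add)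
qed

text \<open>The linear map \<open>u\<^sub>x \<mapsto> (-1)\<^bsup>e x\<^esup> u\<^bsub>\<sigma> x\<^esub>\<close>.\<close>

definition signed_relabel ::
    "nat \<Rightarrow> (nat set \<Rightarrow> nat set) \<Rightarrow> (nat set \<Rightarrow> nat) \<Rightarrow> (nat set \<Rightarrow> real) \<Rightarrow> nat set \<Rightarrow> real" where
  "signed_relabel n \<sigma> e a z =
     (if z \<in> grades n then (-1) ^ e (inv_into (grades n) \<sigma> z) * a (inv_into (grades n) \<sigma> z) else 0)"

lemma signed_relabel_apply:
  assumes "bij_betw \<sigma> (grades n) (grades n)" "x \<in> grades n"
  shows "signed_relabel n \<sigma> e a (\<sigma> x) = (-1) ^ e x * a x"
  using assms by (simp add: signed_relabel_def bij_betw_inv_into_left bij_betwE)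

lemma bij_betw_signed_relabel:
  assumes bij: "bij_betw \<sigma> (grades n) (grades n)"
  shows "bij_betw (signed_relabel n \<sigma> e) (Ocarrier n) (Ocarrier n)"
proof (rule bij_betw_byWitness[where f' = "\<lambda>b x. if x \<in> grades n then (-1) ^ e x * b (\<sigma> x) else 0"])
  have sign_square: "(-1::real) ^ k * (-1) ^ k = 1" for k
    by (simp add: power_mult_distrib[symmetric])
  have \<sigma>_grades: "\<sigma> x \<in> grades n" if "x \<in> grades n" for x
    using bij that by (meson bij_betwE)
  have inv_grades: "inv_into (grades n) \<sigma> z \<in> grades n" if "z \<in> grades n" for z
    using bij that by (metis bij_betw_def inv_into_into)
  show "\<forall>a\<in>Ocarrier n. (\<lambda>x. if x \<in> grades n then (-1) ^ e x * signed_relabel n \<sigma> e a (\<sigma> x) else 0) = a"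
    using bij sign_square by (auto simp: Ocarrier_def fun_eq_iff signed_relabel_apply mult.assoc[symmetric])
  show "\<forall>b\<in>Ocarrier n. signed_relabel n \<sigma> e (\<lambda>x. if x \<in> grades n then (-1) ^ e x * b (\<sigma> x) else 0) = b"
    using bij sign_square inv_grades
    by (auto simp: Ocarrier_def fun_eq_iff signed_relabel_def bij_betw_inv_into_right mult.assoc[symmetric])
  show "signed_relabel n \<sigma> e ` Ocarrier n \<subseteq> Ocarrier n"
    by (auto simp: Ocarrier_def signed_relabel_def)
  show "(\<lambda>b x. if x \<in> grades n then (-1) ^ e x * b (\<sigma> x) else 0) ` Ocarrier n \<subseteq> Ocarrier n"
    by (auto simp: Ocarrier_def)
qed

lemma homogeneous_signed_relabel:
  assumes bij: "bij_betw \<sigma> (grades n) (grades n)" and hom: "homogeneous n a"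
  shows "homogeneous n (signed_relabel n \<sigma> e a)"
proof -
  obtain x where x: "x \<in> grades n" and supp: "\<forall>y. y \<noteq> x \<longrightarrow> a y = 0"
    using hom unfolding homogeneous_def by blast
  have "signed_relabel n \<sigma> e a z = 0" if "z \<noteq> \<sigma> x" for z
  proof (cases "z \<in> grades n")
    case True
    then have "inv_into (grades n) \<sigma> z \<noteq> x"
      using that bij by (metis bij_betw_inv_into_right)
    then show ?thesis using supp by (simp add: signed_relabel_def)
  qed (simp add: signed_relabel_def)
  moreover have "signed_relabel n \<sigma> e a \<in> Ocarrier n"
    by (simp add: Ocarrier_def signed_relabel_def)
  moreover have "\<sigma> x \<in> grades n"
    using bij x by (meson bij_betwE)
  ultimately show ?thesis unfolding homogeneous_def by blast
qed

lemma signed_relabel_Omult: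
  assumes bij: "bij_betw \<sigma> (grades n) (grades n)"
    and add: "\<forall>x\<in>grades n. \<forall>y\<in>grades n. \<sigma> (zadd x y) = zadd (\<sigma> x) (\<sigma> y)"
    and cocycle: "\<forall>x\<in>grades n. \<forall>y\<in>grades n.
      even (twist p' q' (\<sigma> x) (\<sigma> y) + twist p q x y + e x + e y + e (zadd x y))"
    and n: "p + q = n" "p' + q' = n"
  shows "signed_relabel n \<sigma> e (Omult p q a b)
       = Omult p' q' (signed_relabel n \<sigma> e a) (signed_relabel n \<sigma> e b)"
proof
  fix z
  let ?\<phi> = "signed_relabel n \<sigma> e"
  show "?\<phi> (Omult p q a b) z = Omult p' q' (?\<phi> a) (?\<phi> b) z"
  proof (cases "z \<in> grades n")
    case False
    then show ?thesis by (simp add: signed_relabel_def Omult_def n)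
  next
    case True
    then obtain w where w: "w \<in> grades n" and z: "z = \<sigma> w"
      using bij by (metis bij_betw_def imageE)
    have "Omult p' q' (?\<phi> a) (?\<phi> b) z = (\<Sum>x'\<in>grades n.
        (-1) ^ twist p' q' x' (zadd x' (\<sigma> w)) * ?\<phi> a x' * ?\<phi> b (zadd x' (\<sigma> w)))"
      using True by (simp add: Omult_def n z)
    also have "\<dots> = (\<Sum>x\<in>grades n.
        (-1) ^ twist p' q' (\<sigma> x) (zadd (\<sigma> x) (\<sigma> w)) * ?\<phi> a (\<sigma> x) * ?\<phi> b (zadd (\<sigma> x) (\<sigma> w)))"
      using sum.reindex_bij_betw[OF bij, symmetric] by simp
    also have "\<dots> = (\<Sum>x\<in>grades n. (-1) ^ e w * ((-1) ^ twist p q x (zadd x w) * a x * b (zadd x w)))"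
    proof (rule sum.cong[OF refl])
      fix x assume x: "x \<in> grades n"
      define y where "y = zadd x w"
      have y: "y \<in> grades n" and xy: "zadd x y = w"
        using x w by (auto simp: y_def grades_def zadd_def)
      have "(-1::real) ^ twist p' q' (\<sigma> x) (\<sigma> y) * (-1) ^ e x * (-1) ^ e y
          = (-1) ^ e w * (-1) ^ twist p q x y"
        using minus_one_power_cocycle cocycle x y xy by blast
      moreover have "zadd (\<sigma> x) (\<sigma> w) = \<sigma> y"
        using add x w xy by (metis zadd_def Un_commute y_def)
      ultimately show "(-1) ^ twist p' q' (\<sigma> x) (zadd (\<sigma> x) (\<sigma> w)) * ?\<phi> a (\<sigma> x) * ?\<phi> b (zadd (\<sigma> x) (\<sigma> w))
          = (-1) ^ e w * ((-1) ^ twist p q x (zadd x w) * a x * b (zadd x w))"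
        using bij x y by (simp add: signed_relabel_apply y_def[symmetric] ac_simps)
    qed
    also have "\<dots> = ?\<phi> (Omult p q a b) z"
      using bij w by (simp add: z signed_relabel_apply Omult_def n sum_distrib_left)
    finally show ?thesis by simp
  qed
qed

lemma graded_iso_if_twist_equivalent:
  assumes "twist_equivalent (p + q) {1..p} {1..p'}" and n: "p' + q' = p + q"
  shows "graded_iso p q p' q'"
proof -
  obtain \<sigma> e where bij: "bij_betw \<sigma> (grades (p + q)) (grades (p + q))"
    and add: "\<forall>x\<in>grades (p + q). \<forall>y\<in>grades (p + q). \<sigma> (zadd x y) = zadd (\<sigma> x) (\<sigma> y)"
    and cocycle: "\<forall>x\<in>grades (p + q). \<forall>y\<in>grades (p + q).
      even (twist p' q' (\<sigma> x) (\<sigma> y) + twist p q x y + e x + e y + e (zadd x y))"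
    using assms unfolding twist_equivalent_def twist_eq_twist_on by metis
  let ?\<phi> = "signed_relabel (p + q) \<sigma> e"
  show ?thesis unfolding graded_iso_def n
  proof (intro exI[of _ ?\<phi>] conjI ballI allI impI)
    show "bij_betw ?\<phi> (Ocarrier (p + q)) (Ocarrier (p + q))"
      using bij by (rule bij_betw_signed_relabel)
    show "?\<phi> (\<lambda>x. a x + b x) = (\<lambda>x. ?\<phi> a x + ?\<phi> b x)" for a b
      by (auto simp: signed_relabel_def algebra_simps)
    show "?\<phi> (\<lambda>x. c * a x) = (\<lambda>x. c * ?\<phi> a x)" for a c
      by (auto simp: signed_relabel_def algebra_simps)
    show "?\<phi> (Omult p q a b) = Omult p' q' (?\<phi> a) (?\<phi> b)" for a b
      using bij add cocycle n by (intro signed_relabel_Omult) auto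
    show "homogeneous (p + q) (?\<phi> a)" if "homogeneous (p + q) a" for a
      using bij that by (rule homogeneous_signed_relabel)
  qed
qed

section \<open>Flipping a set of four generators\<close>

lemma odd_card_Int_shift:
  assumes "finite D"
  shows "odd (card ((if a then zadd x V else x) \<inter> (if b then zadd y V else y) \<inter> D)) \<longleftrightarrow>
    (((odd (card (x \<inter> y \<inter> D)) \<noteq> (b \<and> odd (card (x \<inter> V \<inter> D))))
      \<noteq> (a \<and> odd (card (y \<inter> V \<inter> D)))) \<noteq> (a \<and> b \<and> odd (card (V \<inter> D))))"
proof -
  have left: "odd (card (zadd u v \<inter> w \<inter> D)) \<longleftrightarrow> (odd (card (u \<inter> w \<inter> D)) \<noteq> odd (card (v \<inter> w \<inter> D)))"
    for u v w
    using odd_card_zadd_Int[of "w \<inter> D" u v] assms by (simp add: Int_assoc)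
  have right: "odd (card (u \<inter> zadd v w \<inter> D)) \<longleftrightarrow> (odd (card (u \<inter> v \<inter> D)) \<noteq> odd (card (u \<inter> w \<inter> D)))"
    for u v w
    using odd_card_zadd_Int[of "u \<inter> D" v w] assms by (simp add: Int_ac)
  show ?thesis
    by (cases a; cases b; simp add: left right Int_commute[of V y]; argo)
qed

lemma odd_upper_form_shift:
  "odd (upper_form n (if a then zadd x V else x) (if b then zadd y V else y)) \<longleftrightarrow>
    (((odd (upper_form n x y) \<noteq> (b \<and> odd (upper_form n x V)))
      \<noteq> (a \<and> odd (upper_form n V y))) \<noteq> (a \<and> b \<and> odd (upper_form n V V)))"
  by (cases a; cases b; simp add: odd_upper_form_zadd_left odd_upper_form_zadd_right; argo)

lemma odd_twist_on_shift:
  assumes x: "x \<subseteq> {1..n}" and y: "y \<subseteq> {1..n}" and V: "V \<subseteq> {1..n}" "card V mod 4 = 2"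
    and Q: "finite Q"
  shows "odd (twist_on n Q (if a then zadd x V else x) (if b then zadd y V else y)) \<longleftrightarrow>
    (((((((odd (twist_on n Q x y)
      \<noteq> (a \<and> odd (card y) \<and> even (card (x \<inter> V))))
      \<noteq> (even (card x) \<and> ((b \<and> odd (card (x \<inter> V))) \<noteq> (a \<and> odd (card (y \<inter> V))))))
      \<noteq> (b \<and> odd (upper_form n x V))) \<noteq> (a \<and> odd (upper_form n V y)))
      \<noteq> (a \<and> b \<and> even (card (V \<inter> Q))))
      \<noteq> (b \<and> odd (card (x \<inter> V \<inter> Q)))) \<noteq> (a \<and> odd (card (y \<inter> V \<inter> Q))))"
proof -
  let ?X = "if a then zadd x V else x" and ?Y = "if b then zadd y V else y"
  have fin: "finite x" "finite y" "finite V"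
    using x y V finite_subset by blast+
  have V_even: "even (card V)" and V_choose: "odd (card V choose 2)"
    using card_mod_4_eq_2_parities[OF V(2)] by auto
  have XY: "?X \<subseteq> {1..n}" "?Y \<subseteq> {1..n}"
    using x y V by (auto simp: zadd_def)
  have card_X: "odd (card ?X) \<longleftrightarrow> odd (card x)" and card_Y: "odd (card ?Y) \<longleftrightarrow> odd (card y)"
    using odd_card_zadd fin V_even by auto
  have choose_X: "odd (card ?X choose 2) \<longleftrightarrow> (odd (card x choose 2) \<noteq> (a \<and> even (card (x \<inter> V))))"
    using odd_choose_two_card_zadd[of x V] fin V_even V_choose by auto
  have "?X \<inter> ?Y \<inter> {1..n} = ?X \<inter> ?Y" "x \<inter> y \<inter> {1..n} = x \<inter> y" "x \<inter> V \<inter> {1..n} = x \<inter> V"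
    "y \<inter> V \<inter> {1..n} = y \<inter> V" "V \<inter> {1..n} = V"
    using x y XY V by auto
  then have meet_XY: "odd (card (?X \<inter> ?Y)) \<longleftrightarrow>
      ((odd (card (x \<inter> y)) \<noteq> (b \<and> odd (card (x \<inter> V)))) \<noteq> (a \<and> odd (card (y \<inter> V))))"
    using odd_card_Int_shift[of "{1..n}" a x V b y] V_even by simp
  have meet_Q: "odd (card (?X \<inter> ?Y \<inter> Q)) \<longleftrightarrow>
      (((odd (card (x \<inter> y \<inter> Q)) \<noteq> (b \<and> odd (card (x \<inter> V \<inter> Q))))
        \<noteq> (a \<and> odd (card (y \<inter> V \<inter> Q)))) \<noteq> (a \<and> b \<and> odd (card (V \<inter> Q))))"
    using odd_card_Int_shift[OF Q] .
  have "V \<inter> {1..n} = V" using V by auto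
  then have "odd (upper_form n V V)"
    using V_even V_choose by (simp add: upper_form_diag choose_two_Suc)
  then have upper: "odd (upper_form n ?X ?Y) \<longleftrightarrow>
      (((odd (upper_form n x y) \<noteq> (b \<and> odd (upper_form n x V)))
        \<noteq> (a \<and> odd (upper_form n V y))) \<noteq> (a \<and> b))"
    using odd_upper_form_shift[of n a x V b y] by simp
  show ?thesis
    unfolding odd_twist_on_iff[OF XY] odd_twist_on_iff[OF x y]
    using card_X card_Y choose_X meet_XY meet_Q upper by (smt (verit))
qed

definition parity_flip :: "nat \<Rightarrow> nat set \<Rightarrow> nat set \<Rightarrow> nat set" where
  "parity_flip n S x = (if odd (card (x \<inter> S)) then zadd x ({1..n} - S) else x)"

definition flip_weight :: "nat \<Rightarrow> nat set \<Rightarrow> nat set \<Rightarrow> nat set \<Rightarrow> nat" where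
  "flip_weight n S P x =
     upper_form n ({1..n} - S) x + card (x \<inter> ({1..n} - S)) + card (x \<inter> ({1..n} - S) \<inter> P)"

definition flip_exponent :: "nat \<Rightarrow> nat set \<Rightarrow> nat set \<Rightarrow> nat set \<Rightarrow> nat" where
  "flip_exponent n S P x = (card (x \<inter> S) choose 2) + card (x \<inter> S) * flip_weight n S P x"

lemma parity_flip_grades: "x \<in> grades n \<Longrightarrow> parity_flip n S x \<in> grades n"
  by (auto simp: parity_flip_def grades_def zadd_def)

lemma parity_flip_involution: "parity_flip n S (parity_flip n S x) = x"
proof -
  have "zadd x ({1..n} - S) \<inter> S = x \<inter> S" "zadd (zadd x ({1..n} - S)) ({1..n} - S) = x"
    by (auto simp: zadd_def)
  then show ?thesis by (simp add: parity_flip_def)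
qed

lemma parity_flip_zadd:
  "finite S \<Longrightarrow> parity_flip n S (zadd x y) = zadd (parity_flip n S x) (parity_flip n S y)"
  unfolding parity_flip_def odd_card_zadd_Int[of S x y, symmetric]
  by (simp add: odd_card_zadd_Int) (auto simp: zadd_def)

lemma odd_flip_weight_zadd:
  "odd (flip_weight n S P (zadd x y)) \<longleftrightarrow> (odd (flip_weight n S P x) \<noteq> odd (flip_weight n S P y))"
proof -
  have "odd (card (zadd x y \<inter> ({1..n} - S))) \<longleftrightarrow>
      (odd (card (x \<inter> ({1..n} - S))) \<noteq> odd (card (y \<inter> ({1..n} - S))))"
    "odd (card (zadd x y \<inter> (({1..n} - S) \<inter> P))) \<longleftrightarrow>
      (odd (card (x \<inter> (({1..n} - S) \<inter> P))) \<noteq> odd (card (y \<inter> (({1..n} - S) \<inter> P))))"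
    by (simp_all add: odd_card_zadd_Int)
  then show ?thesis
    unfolding flip_weight_def odd_add odd_upper_form_zadd_right Int_assoc by argo
qed

lemma odd_flip_exponent_coboundary:
  assumes "finite S"
  shows "odd (flip_exponent n S P x + flip_exponent n S P y + flip_exponent n S P (zadd x y)) \<longleftrightarrow>
    ((((odd (card (x \<inter> S)) \<and> odd (card (y \<inter> S))) \<noteq> odd (card (x \<inter> y \<inter> S)))
      \<noteq> (odd (card (x \<inter> S)) \<and> odd (flip_weight n S P y)))
      \<noteq> (odd (card (y \<inter> S)) \<and> odd (flip_weight n S P x)))"
proof -
  have "zadd x y \<inter> S = zadd (x \<inter> S) (y \<inter> S)" "x \<inter> S \<inter> (y \<inter> S) = x \<inter> y \<inter> S"
    by (auto simp: zadd_def)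
  then have "odd (card (zadd x y \<inter> S) choose 2) \<longleftrightarrow>
      (((odd (card (x \<inter> S) choose 2) \<noteq> odd (card (y \<inter> S) choose 2))
        \<noteq> (odd (card (x \<inter> S)) \<and> odd (card (y \<inter> S)))) \<noteq> odd (card (x \<inter> y \<inter> S)))"
    using odd_choose_two_card_zadd[of "x \<inter> S" "y \<inter> S"] assms by simp
  then show ?thesis
    using odd_flip_weight_zadd[of n S P x y] odd_card_zadd_Int[OF assms, of x y]
    unfolding flip_exponent_def odd_add even_mult_iff by argo
qed

lemma card_complement_mod_4:
  fixes n :: nat
  assumes "n mod 4 = 2" "S \<subseteq> {1..n}" "card S = 4"
  shows "card ({1..n} - S) mod 4 = 2"
proof -
  have "card S \<le> n" "card ({1..n} - S) = n - card S"
    using assms(2) card_mono[OF _ assms(2)] by (auto simp: card_Diff_subset finite_subset)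
  then have "n = card ({1..n} - S) + 4"
    using assms(3) by simp
  then show ?thesis
    using assms(1) by (metis mod_add_self2)
qed

lemma odd_twist_on_zadd_set:
  assumes "finite (x \<inter> y)"
  shows "odd (twist_on n (zadd P S) x y) \<longleftrightarrow> (odd (twist_on n P x y) \<noteq> odd (card (x \<inter> y \<inter> S)))"
proof -
  have "x \<inter> y \<inter> zadd P S = zadd P S \<inter> (x \<inter> y)" "x \<inter> y \<inter> P = P \<inter> (x \<inter> y)"
    "x \<inter> y \<inter> S = S \<inter> (x \<inter> y)"
    by auto
  then have "odd (card (x \<inter> y \<inter> zadd P S)) \<longleftrightarrow>
      (odd (card (x \<inter> y \<inter> P)) \<noteq> odd (card (x \<inter> y \<inter> S)))"
    using odd_card_zadd_Int[OF assms] by simp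
  then show ?thesis
    unfolding twist_on_def odd_add by argo
qed

lemma flip_cocycle:
  assumes n: "n mod 4 = 2" and S: "S \<subseteq> {1..n}" "card S = 4"
    and P: "P \<subseteq> {1..n}" "odd (card (P - S))"
    and x: "x \<subseteq> {1..n}" and y: "y \<subseteq> {1..n}"
  shows "even (twist_on n (zadd P S) (parity_flip n S x) (parity_flip n S y) + twist_on n P x y
    + flip_exponent n S P x + flip_exponent n S P y + flip_exponent n S P (zadd x y))"
proof -
  define V where "V = {1..n} - S"
  let ?a = "odd (card (x \<inter> S))" and ?b = "odd (card (y \<inter> S))"
  have fin: "finite S" "finite x" "finite y" "finite (zadd P S)"
    using S x y P by (auto simp: zadd_def intro: finite_subset)
  have V_sub: "V \<subseteq> {1..n}"
    by (auto simp: V_def)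
  have V_mod: "card V mod 4 = 2"
    unfolding V_def using n S by (rule card_complement_mod_4)
  have flip_xy: "parity_flip n S x = (if ?a then zadd x V else x)"
    "parity_flip n S y = (if ?b then zadd y V else y)"
    by (simp_all add: parity_flip_def V_def)
  note shift = odd_twist_on_shift[OF x y V_sub V_mod fin(4), of ?a ?b, folded flip_xy]
  have twist_zadd: "odd (twist_on n (zadd P S) x y) \<longleftrightarrow>
      (odd (twist_on n P x y) \<noteq> odd (card (x \<inter> y \<inter> S)))"
    using fin by (intro odd_twist_on_zadd_set) auto
  have meets: "V \<inter> zadd P S = P - S" "x \<inter> V \<inter> zadd P S = x \<inter> V \<inter> P"
    "y \<inter> V \<inter> zadd P S = y \<inter> V \<inter> P"
    using P by (auto simp: V_def zadd_def)
  have card_xy: "odd (card x) \<longleftrightarrow> (?a \<noteq> odd (card (x \<inter> V)))"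
    "odd (card y) \<longleftrightarrow> (?b \<noteq> odd (card (y \<inter> V)))"
    using odd_card_split[of x S V] odd_card_split[of y S V] fin x y by (auto simp: V_def)
  have "x \<inter> {1..n} = x" "V \<inter> {1..n} = V" "x \<inter> V \<inter> {1..n} = x \<inter> V"
    using x by (auto simp: V_def)
  then have upper_xV: "odd (upper_form n x V) \<longleftrightarrow> (odd (upper_form n V x) \<noteq> odd (card (x \<inter> V)))"
    using upper_form_add_swap[of n x V] card_mod_4_eq_2_parities(1)[OF V_mod]
    by (metis even_add even_mult_iff)
  show ?thesis
    using shift[unfolded meets] twist_zadd card_xy upper_xV P(2)
      odd_flip_exponent_coboundary[OF fin(1), of n P x y, unfolded flip_weight_def V_def[symmetric]]
    unfolding even_add by argo
qed

lemma twist_equivalent_flip: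
  assumes "n mod 4 = 2" "S \<subseteq> {1..n}" "card S = 4" "P \<subseteq> {1..n}" "odd (card (P - S))"
  shows "twist_equivalent n P (zadd P S)"
  unfolding twist_equivalent_def
proof (intro exI[of _ "parity_flip n S"] exI[of _ "flip_exponent n S P"] conjI ballI)
  show "bij_betw (parity_flip n S) (grades n) (grades n)"
    by (rule bij_betw_byWitness[where f' = "parity_flip n S"])
      (auto simp: parity_flip_involution parity_flip_grades)
  have "finite S"
    using assms(2) finite_subset by blast
  then show "parity_flip n S (zadd x y) = zadd (parity_flip n S x) (parity_flip n S y)" for x y
    by (rule parity_flip_zadd)
  show "even (twist_on n (zadd P S) (parity_flip n S x) (parity_flip n S y) + twist_on n P x y
      + flip_exponent n S P x + flip_exponent n S P y + flip_exponent n S P (zadd x y))"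
    if "x \<in> grades n" "y \<in> grades n" for x y
    using flip_cocycle[OF assms] that by (simp add: grades_def)
qed

lemma twist_equivalent_flipI:
  assumes "n mod 4 = 2" "S \<subseteq> {1..n}" "card S = 4" "P \<subseteq> {1..n}" "odd (card (P - S))"
    and "zadd P S = P'"
  shows "twist_equivalent n P P'"
  using twist_equivalent_flip[OF assms(1-5)] assms(6) by simp

lemma twist_equivalent_add_four:
  assumes "n mod 4 = 2" "odd p" "p + 4 \<le> n"
  shows "twist_equivalent n {1..p} {1..p + 4}"
proof -
  have "{1..p} - {p + 1..p + 4} = {1..p}" "zadd {1..p} {p + 1..p + 4} = {1..p + 4}"
    by (auto simp: zadd_def)
  then show ?thesis
    using twist_equivalent_flip[of n "{p + 1..p + 4}" "{1..p}"] assms by simp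
qed

lemma twist_equivalent_remove_two:
  assumes n: "n mod 4 = 2" and p: "even p" "4 \<le> p" "p + 2 \<le> n"
  shows "twist_equivalent n {1..p} {1..p - 2}"
proof -
  obtain m where "p = m + 4"
    using p(2) by (metis add.commute le_Suc_ex)
  with p have m: "p = m + 4" "even m" "m + 6 \<le> n"
    by simp_all
  define P1 where "P1 = insert (m + 4) (insert (m + 5) {1..m})"
  define P2 where "P2 = {m + 1, m + 3, m + 5, m + 6} \<union> {1..m}"
  have "twist_equivalent n {1..m + 4} P1"
  proof (rule twist_equivalent_flipI[OF n, of "{m + 1, m + 2, m + 3, m + 5}"])
    have "{1..m + 4} - {m + 1, m + 2, m + 3, m + 5} = insert (m + 4) {1..m}"
      by auto
    then show "odd (card ({1..m + 4} - {m + 1, m + 2, m + 3, m + 5}))"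
      using m by simp
  qed (use m in \<open>auto simp: P1_def zadd_def\<close>)
  moreover have "twist_equivalent n P1 P2"
  proof (rule twist_equivalent_flipI[OF n, of "{m + 1, m + 3, m + 4, m + 6}"])
    have "P1 - {m + 1, m + 3, m + 4, m + 6} = insert (m + 5) {1..m}"
      by (auto simp: P1_def)
    then show "odd (card (P1 - {m + 1, m + 3, m + 4, m + 6}))"
      using m by simp
  qed (use m in \<open>auto simp: P1_def P2_def zadd_def\<close>)
  moreover have "twist_equivalent n P2 {1..m + 2}"
  proof (rule twist_equivalent_flipI[OF n, of "{m + 2, m + 3, m + 5, m + 6}"])
    have "P2 - {m + 2, m + 3, m + 5, m + 6} = insert (m + 1) {1..m}"
      by (auto simp: P2_def)
    then show "odd (card (P2 - {m + 2, m + 3, m + 5, m + 6}))"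
      using m by simp
  qed (use m in \<open>auto simp: P2_def zadd_def\<close>)
  ultimately show ?thesis
    unfolding m(1) by (auto dest: twist_equivalent_trans)
qed

theorem mainTheorem8:
  fixes p q k :: nat
  assumes "p + q = 4 * k + 2" and "k \<ge> 1"
  shows "(odd p \<and> odd q \<and> p \<ge> 1 \<and> q \<ge> 5 \<longrightarrow> graded_iso p q (p + 4) (q - 4))
       \<and> (even p \<and> even q \<and> p \<ge> 4 \<and> q \<ge> 2 \<longrightarrow> graded_iso p q (p - 2) (q + 2))"
proof (intro conjI impI)
  \<comment> \<open>\<open>k \<ge> 1\<close> is implied by the other hypotheses of either part.\<close>
  have n: "(p + q) mod 4 = 2"
    using assms(1) by presburger
  show "graded_iso p q (p + 4) (q - 4)" if "odd p \<and> odd q \<and> p \<ge> 1 \<and> q \<ge> 5"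
  proof (rule graded_iso_if_twist_equivalent)
    show "twist_equivalent (p + q) {1..p} {1..p + 4}"
      using that by (intro twist_equivalent_add_four[OF n]) auto
  qed (use that in simp)
  show "graded_iso p q (p - 2) (q + 2)" if "even p \<and> even q \<and> p \<ge> 4 \<and> q \<ge> 2"
  proof (rule graded_iso_if_twist_equivalent)
    show "twist_equivalent (p + q) {1..p} {1..p - 2}"
      using that by (intro twist_equivalent_remove_two[OF n]) auto
  qed (use that in arith)
qed

end
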